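(* Let $S$ be a connected compact surface (closed, or with boundary) with a simplicial triangulation $T$ (so any two vertices span at most one edge), and let $\mathbf{d}_1,\mathbf{d}_2$ be two Euclidean polyhedral metrics on $(S,T)$, i.e. $(S,T,\mathbf{d}_1)$ and $(S,T,\mathbf{d}_2)$ are Euclidean polyhedral surfaces. Let $L_1,L_2$ be their discrete Laplace matrices. Then $L_1=L_2$ if and only if there is a constant $c>0$ with $\mathbf{d}_2=c\,\mathbf{d}_1$ (i.e. every edge length is multiplied by the same factor $c$).
   Context: An Euclidean polyhedral surface is a triple $(S,T,\mathbf{d})$ where $S$ is a surface, $T$ a triangulation of $S$ with vertices $v_1,\dots,v_N$, edges $e_1,\dots,e_m$ and faces $F$, and $\mathbf{d}$ is a metric on $S$ whose restriction to each triangle is isometric to a Euclidean triangle; equivalently $\mathbf{d}$ is given by edge lengths $d_k=d(e_k)>0$ satisfying the strict triangle inequalities on every face. Cotangent edge weight: if $[v_i,v_j]$ is a boundary edge lying in the single triangle $[v_i,v_j,v_k]$ and $\alpha$ is the angle at $v_k$, then $w_{ij}=\tfrac12\cot\alpha$; if $[v_i,v_j]$ is an interior edge and $\alpha,\beta$ are the two angles opposite to it in the two adjacent triangles, then $w_{ij}=\tfrac12(\cot\alpha+\cot\beta)$; $w_{ij}=0$ if $v_i,v_j$ are not joined by an edge. The discrete Laplace matrix $L=(L_{ij})$ is the $N\times N$ matrix with $L_{ij}=-w_{ij}$ for $i\neq j$ and $L_{ii}=\sum_k w_{ik}$. *)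

theory Defs
  imports Complex_Main
begin

text \<open>A finite simplicial 2-complex given by its vertex set V and its set of
triangles F (each a 3-element vertex set). Edges are the 2-element subsets of triangles.\<close>

definition edges :: "'a set set \<Rightarrow> 'a set set" where
  "edges F = {e. card e = 2 \<and> (\<exists>f\<in>F. e \<subseteq> f)}"

definition link_edges :: "'a set set \<Rightarrow> 'a \<Rightarrow> 'a set set" where
  "link_edges F v = {f - {v} | f. f \<in> F \<and> v \<in> f}"

definition link_vertices :: "'a set set \<Rightarrow> 'a \<Rightarrow> 'a set" where
  "link_vertices F v = \<Union>(link_edges F v)"

text \<open>Simplicial triangulation of a connected compact surface (possibly with boundary):
finite, pure 2-dimensional, every edge lies in one (boundary) or two (interior) triangles,
every vertex link is connected (hence a path or a cycle), and the 1-skeleton is connected.\<close>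

definition surface_triangulation :: "'a set \<Rightarrow> 'a set set \<Rightarrow> bool" where
  "surface_triangulation V F \<longleftrightarrow>
     finite V \<and> F \<noteq> {} \<and> (\<forall>f\<in>F. card f = 3 \<and> f \<subseteq> V) \<and> V = \<Union>F \<and>
     (\<forall>e\<in>edges F. card {f\<in>F. e \<subseteq> f} \<le> 2) \<and>
     (\<forall>v\<in>V. \<forall>u\<in>link_vertices F v. \<forall>w\<in>link_vertices F v.
        (u, w) \<in> {(x, y). {x, y} \<in> link_edges F v}\<^sup>*) \<and>
     (\<forall>u\<in>V. \<forall>w\<in>V. (u, w) \<in> {(x, y). {x, y} \<in> edges F}\<^sup>*)"

definition euclidean_metric :: "'a set set \<Rightarrow> ('a set \<Rightarrow> real) \<Rightarrow> bool" where
  "euclidean_metric F d \<longleftrightarrow>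
     (\<forall>e\<in>edges F. d e > 0) \<and>
     (\<forall>f\<in>F. \<forall>i\<in>f. \<forall>j\<in>f. \<forall>k\<in>f. i \<noteq> j \<and> j \<noteq> k \<and> i \<noteq> k \<longrightarrow>
        d {i, j} < d {i, k} + d {k, j})"

text \<open>Angle at vertex k in the triangle {i,j,k} (law of cosines).\<close>

definition tri_angle :: "('a set \<Rightarrow> real) \<Rightarrow> 'a \<Rightarrow> 'a \<Rightarrow> 'a \<Rightarrow> real" where
  "tri_angle d i j k =
     arccos (((d {k, i})^2 + (d {k, j})^2 - (d {i, j})^2) / (2 * d {k, i} * d {k, j}))"

definition cot_weight :: "'a set set \<Rightarrow> ('a set \<Rightarrow> real) \<Rightarrow> 'a \<Rightarrow> 'a \<Rightarrow> real" where
  "cot_weight F d i j =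
     (if {i, j} \<in> edges F
      then (\<Sum>f\<in>{f\<in>F. {i, j} \<subseteq> f}. cot (tri_angle d i j (the_elem (f - {i, j})))) / 2
      else 0)"

definition laplace :: "'a set \<Rightarrow> 'a set set \<Rightarrow> ('a set \<Rightarrow> real) \<Rightarrow> 'a \<Rightarrow> 'a \<Rightarrow> real" where
  "laplace V F d i j =
     (if i = j then (\<Sum>k\<in>V - {i}. cot_weight F d i k) else - cot_weight F d i j)"

end

theory Submission
  imports Defs
begin

(* Proof idea: an energy argument.
   For metrics d and d' on the same triangulation consider the energy
     E(d, d') = sum over ordered pairs of adjacent vertices i, j of w^d_ij * d'_ij^2,
   which depends on d only through its cotangent weights.  Splitting the weights
   into their per-triangle contributions, E(d, d') is half a sum over faces of a
   face energy.  On a single triangle the law of cosines turns the face energy into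
   2 * B(p, q) / sqrt (H p), where p, q are the squared side lengths, H is
   16 * area^2 written in squared lengths (Heron) and B its polar form.
   H has signature (1,2), so the reverse Cauchy-Schwarz (Pedoe) inequality gives
   B(p, q) >= sqrt (H p) * sqrt (H q), with equality only for proportional p, q.
   Hence the face energy of (d1, d2) dominates that of (d2, d2), with equality
   exactly for similar triangles.  If L1 = L2 then E(d1, d2) = E(d2, d2), so every
   face is similar; connectivity of the vertex links and of the 1-skeleton glues
   the similarity ratios into one global constant.  The converse direction is the
   scale invariance of angles. *)

section \<open>Heron's quadratic form and Pedoe's inequality\<close>

text \<open>For squared side lengths p, q, r of a triangle, heron p q r is sixteen times
the squared area (Heron's formula); heron_polar is the associated bilinear form.\<close>

definition heron :: "real \<Rightarrow> real \<Rightarrow> real \<Rightarrow> real" where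
  "heron p q r = 2*p*q + 2*q*r + 2*r*p - p^2 - q^2 - r^2"

definition heron_polar :: "real \<Rightarrow> real \<Rightarrow> real \<Rightarrow> real \<Rightarrow> real \<Rightarrow> real \<Rightarrow> real" where
  "heron_polar p1 p2 p3 q1 q2 q3 = (p2+p3-p1)*q1 + (p1+p3-p2)*q2 + (p1+p2-p3)*q3"

text \<open>The form equals (sum p)(sum q) - 2 p.q, which exhibits its signature (1,2).\<close>

lemma heron_polar_alt:
  "heron_polar p1 p2 p3 q1 q2 q3 = (p1+p2+p3)*(q1+q2+q3) - 2*(p1*q1+p2*q2+p3*q3)"
  unfolding heron_polar_def by (simp add: algebra_simps)

lemma heron_polar_self: "heron_polar p1 p2 p3 p1 p2 p3 = heron p1 p2 p3"
  unfolding heron_polar_def heron_def by (simp add: algebra_simps power2_eq_square)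

text \<open>Heron's formula as a product: it is positive for a nondegenerate triangle.\<close>

lemma heron_pos_of_triangle:
  assumes "x > 0" "y > 0" "z > 0" "x < y + z" "y < x + z" "z < x + y"
  shows "heron (x^2) (y^2) (z^2) > 0"
proof -
  have "heron (x^2) (y^2) (z^2) = (x+y+z)*(y+z-x)*(x+z-y)*(x+y-z)"
    by (simp add: heron_def algebra_simps power2_eq_square power4_eq_xxxx)
  then show ?thesis using assms by simp
qed

lemma cauchy_schwarz3:
  "((p1::real)*q1 + p2*q2 + p3*q3)^2 \<le> (p1^2+p2^2+p3^2) * (q1^2+q2^2+q3^2)"
proof -
  have "(p1^2+p2^2+p3^2) * (q1^2+q2^2+q3^2) - (p1*q1 + p2*q2 + p3*q3)^2
        = (p1*q2-p2*q1)^2 + (p2*q3-p3*q2)^2 + (p1*q3-p3*q1)^2"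
    by (simp add: algebra_simps power2_eq_square)
  moreover have "(p1*q2-p2*q1)^2 + (p2*q3-p3*q2)^2 + (p1*q3-p3*q1)^2 \<ge> 0" by simp
  ultimately show ?thesis by linarith
qed

text \<open>Signature (1,2): the orthogonal complement of a timelike vector p
(heron p > 0) is spacelike, i.e. it meets the closed cone heron \<ge> 0 only in 0.\<close>

lemma heron_orthogonal_complement:
  assumes p: "heron p1 p2 p3 > 0" and orth: "heron_polar p1 p2 p3 r1 r2 r3 = 0"
    and r: "heron r1 r2 r3 \<ge> 0"
  shows "r1 = 0 \<and> r2 = 0 \<and> r3 = 0"
proof (rule ccontr)
  assume nonzero: "\<not> ?thesis"
  define s t where "s = p1+p2+p3" and "t = r1+r2+r3"
  define P R where "P = p1^2+p2^2+p3^2" and "R = r1^2+r2^2+r3^2"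
  define PR where "PR = p1*r1+p2*r2+p3*r3"
  have "R > 0" using nonzero unfolding R_def
    by (metis add_nonneg_nonneg add_pos_nonneg add_nonneg_pos zero_le_power2 zero_less_power2)
  have "s^2 > 2*P" using p unfolding s_def P_def heron_polar_self[symmetric] heron_polar_alt
    by (simp add: power2_eq_square algebra_simps)
  have "t^2 \<ge> 2*R" using r unfolding t_def R_def heron_polar_self[symmetric] heron_polar_alt
    by (simp add: power2_eq_square algebra_simps)
  have "s*t = 2*PR" using orth unfolding s_def t_def PR_def heron_polar_alt by simp
  have "PR^2 \<le> P*R" unfolding PR_def P_def R_def by (rule cauchy_schwarz3)
  have "s^2 * t^2 \<ge> s^2 * (2*R)" using \<open>t^2 \<ge> 2*R\<close> by (simp add: mult_left_mono)
  moreover have "s^2 * (2*R) > (2*P) * (2*R)" using \<open>s^2 > 2*P\<close> \<open>R > 0\<close> by simp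
  ultimately have "(s*t)^2 > 4*(P*R)" by (simp add: power_mult_distrib algebra_simps)
  with \<open>s*t = 2*PR\<close> \<open>PR^2 \<le> P*R\<close> show False by (simp add: power_mult_distrib)
qed

lemma reverse_cauchy_schwarz:
  assumes p: "heron p1 p2 p3 > 0"
  shows "heron p1 p2 p3 * heron q1 q2 q3 \<le> (heron_polar p1 p2 p3 q1 q2 q3)^2"
    and "(heron_polar p1 p2 p3 q1 q2 q3)^2 = heron p1 p2 p3 * heron q1 q2 q3 \<Longrightarrow>
         q1 = heron_polar p1 p2 p3 q1 q2 q3 / heron p1 p2 p3 * p1 \<and>
         q2 = heron_polar p1 p2 p3 q1 q2 q3 / heron p1 p2 p3 * p2 \<and>
         q3 = heron_polar p1 p2 p3 q1 q2 q3 / heron p1 p2 p3 * p3"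
proof -
  define a b f where "a = heron p1 p2 p3" and "b = heron q1 q2 q3"
    and "f = heron_polar p1 p2 p3 q1 q2 q3"
  txt \<open>The projection of q to the orthogonal complement of p, scaled by a.\<close>
  define r1 r2 r3 where "r1 = a*q1 - f*p1" and "r2 = a*q2 - f*p2" and "r3 = a*q3 - f*p3"
  have orth: "heron_polar p1 p2 p3 r1 r2 r3 = 0"
    unfolding r1_def r2_def r3_def a_def f_def heron_polar_self[symmetric]
    by (simp add: heron_polar_def algebra_simps)
  have r: "heron r1 r2 r3 = a * (a*b - f^2)"
    unfolding r1_def r2_def r3_def a_def b_def f_def heron_polar_self[symmetric]
    by (simp add: heron_polar_def algebra_simps power2_eq_square)
  show "heron p1 p2 p3 * heron q1 q2 q3 \<le> (heron_polar p1 p2 p3 q1 q2 q3)^2"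
  proof (rule ccontr)
    assume "\<not> ?thesis"
    then have "heron r1 r2 r3 > 0" using r p unfolding a_def b_def f_def by simp
    then show False using heron_orthogonal_complement[OF p orth] by (auto simp: heron_def)
  qed
  assume "(heron_polar p1 p2 p3 q1 q2 q3)^2 = heron p1 p2 p3 * heron q1 q2 q3"
  then have "heron r1 r2 r3 = 0" using r unfolding a_def b_def f_def by simp
  then have "r1 = 0 \<and> r2 = 0 \<and> r3 = 0" using heron_orthogonal_complement[OF p orth] by simp
  then show "q1 = f / a * p1 \<and> q2 = f / a * p2 \<and> q3 = f / a * p3"
    using p unfolding r1_def r2_def r3_def a_def by (simp add: field_simps)
qed

lemma heron_polar_pos:
  assumes "p1 > 0" "p2 > 0" "p3 > 0" "q1 > 0" "q2 > 0" "q3 > 0"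
    and "heron p1 p2 p3 > 0" "heron q1 q2 q3 > 0"
  shows "heron_polar p1 p2 p3 q1 q2 q3 > 0"
proof -
  define s t where "s = p1+p2+p3" and "t = q1+q2+q3"
  define P Q where "P = p1^2+p2^2+p3^2" and "Q = q1^2+q2^2+q3^2"
  define PQ where "PQ = p1*q1+p2*q2+p3*q3"
  have "s^2 > 2*P" using assms(7) unfolding s_def P_def heron_polar_self[symmetric] heron_polar_alt
    by (simp add: power2_eq_square algebra_simps)
  moreover have "t^2 > 2*Q" using assms(8) unfolding t_def Q_def heron_polar_self[symmetric] heron_polar_alt
    by (simp add: power2_eq_square algebra_simps)
  moreover have "P \<ge> 0" "Q \<ge> 0" unfolding P_def Q_def by simp_all
  ultimately have "s^2 * t^2 > (2*P) * (2*Q)"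
    by (smt (verit) mult_strict_mono zero_le_mult_iff)
  moreover have "PQ^2 \<le> P*Q" unfolding PQ_def P_def Q_def by (rule cauchy_schwarz3)
  ultimately have "(s*t)^2 > (2*PQ)^2" by (simp add: power_mult_distrib algebra_simps)
  moreover have "s > 0" "t > 0" using assms unfolding s_def t_def by simp_all
  ultimately have "s*t > 2*PQ" by (smt (verit) mult_pos_pos power2_le_imp_le)
  then show ?thesis unfolding heron_polar_alt s_def t_def PQ_def by simp
qed

lemma pedoe_inequality:
  assumes pos: "p1 > 0" "p2 > 0" "p3 > 0" "q1 > 0" "q2 > 0" "q3 > 0"
    and p: "heron p1 p2 p3 > 0" and q: "heron q1 q2 q3 > 0"
  shows "sqrt (heron p1 p2 p3) * sqrt (heron q1 q2 q3) \<le> heron_polar p1 p2 p3 q1 q2 q3"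
    and "heron_polar p1 p2 p3 q1 q2 q3 = sqrt (heron p1 p2 p3) * sqrt (heron q1 q2 q3) \<Longrightarrow>
         \<exists>l>0. q1 = l*p1 \<and> q2 = l*p2 \<and> q3 = l*p3"
proof -
  have f: "heron_polar p1 p2 p3 q1 q2 q3 > 0" using heron_polar_pos[OF pos p q] .
  have "sqrt (heron p1 p2 p3 * heron q1 q2 q3) \<le> sqrt ((heron_polar p1 p2 p3 q1 q2 q3)^2)"
    using reverse_cauchy_schwarz(1)[OF p] by (rule real_sqrt_le_mono)
  then show "sqrt (heron p1 p2 p3) * sqrt (heron q1 q2 q3) \<le> heron_polar p1 p2 p3 q1 q2 q3"
    using f by (simp add: real_sqrt_mult)
  assume "heron_polar p1 p2 p3 q1 q2 q3 = sqrt (heron p1 p2 p3) * sqrt (heron q1 q2 q3)"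
  then have "(heron_polar p1 p2 p3 q1 q2 q3)^2 = heron p1 p2 p3 * heron q1 q2 q3"
    using p q by (simp add: power_mult_distrib)
  moreover have "heron_polar p1 p2 p3 q1 q2 q3 / heron p1 p2 p3 > 0" using f p by simp
  ultimately show "\<exists>l>0. q1 = l*p1 \<and> q2 = l*p2 \<and> q3 = l*p3"
    using reverse_cauchy_schwarz(2)[OF p] by blast
qed

section \<open>Face energies\<close>

lemma cot_arccos_law_of_cosines:
  assumes "x > 0" "y > 0" "heron (x^2) (y^2) (z^2) > 0"
  shows "cot (arccos ((x^2+y^2-z^2)/(2*x*y))) = (x^2+y^2-z^2) / sqrt (heron (x^2) (y^2) (z^2))"
proof -
  define t h where "t = (x^2+y^2-z^2)/(2*x*y)" and "h = heron (x^2) (y^2) (z^2)"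
  have sin2: "1 - t^2 = h/(2*x*y)^2" unfolding t_def h_def heron_def using assms
    by (simp add: field_simps power2_eq_square)
  then have "1 - t^2 > 0" using assms unfolding h_def by simp
  then have "\<bar>t\<bar> < 1" using abs_square_less_1[of t] by linarith
  then have t: "-1 \<le> t" "t \<le> 1" by auto
  have "sqrt (1 - t^2) = sqrt h / (2*x*y)" using sin2 assms by (simp add: real_sqrt_divide)
  then have "cot (arccos t) = t / (sqrt h / (2*x*y))"
    by (simp add: cot_def cos_arccos t sin_arccos)
  also have "\<dots> = (x^2+y^2-z^2) / sqrt h"
    using assms unfolding t_def h_def by (simp add: field_simps)
  finally show ?thesis unfolding t_def h_def .
qed

lemma cot_tri_angle:
  assumes "d {k,i} = x" "d {k,j} = y" "d {i,j} = z" "x > 0" "y > 0" "heron (x^2) (y^2) (z^2) = h"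
    and "h > 0"
  shows "cot (tri_angle d i j k) = (x^2+y^2-z^2) / sqrt h"
  unfolding tri_angle_def using assms cot_arccos_law_of_cosines[of x y z] by simp

text \<open>Face energy of a triangle f: the angles are measured in the metric d, the squared
lengths in d'.  Every edge is counted twice (both orientations).\<close>

definition face_energy :: "('a set \<Rightarrow> real) \<Rightarrow> ('a set \<Rightarrow> real) \<Rightarrow> 'a set \<Rightarrow> real" where
  "face_energy d d' f = (\<Sum>i\<in>f. \<Sum>j\<in>f.
     if i \<noteq> j then cot (tri_angle d i j (the_elem (f - {i,j}))) * (d' {i,j})^2 else 0)"

lemma face_energy_triangle:
  assumes dist: "a \<noteq> b" "b \<noteq> c" "a \<noteq> c"
    and len: "d {b,c} = x" "d {a,c} = y" "d {a,b} = z" "x > 0" "y > 0" "z > 0"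
    and H: "heron (x^2) (y^2) (z^2) > 0"
  shows "face_energy d d' {a,b,c} =
    2 * heron_polar (x^2) (y^2) (z^2) (d' {b,c}^2) (d' {a,c}^2) (d' {a,b}^2) / sqrt (heron (x^2) (y^2) (z^2))"
proof -
  define h where "h = heron (x^2) (y^2) (z^2)"
  have "h > 0" using H h_def by simp
  have opp: "{a,b,c} - {a,b} = {c}" "{a,b,c} - {b,a} = {c}" "{a,b,c} - {a,c} = {b}"
    "{a,b,c} - {c,a} = {b}" "{a,b,c} - {b,c} = {a}" "{a,b,c} - {c,b} = {a}" using dist by auto
  have comm: "{c,a} = {a,c}" "{c,b} = {b,c}" "{b,a} = {a,b}" by auto
  note cot = cot_tri_angle[where h = h, OF _ _ _ _ _ _ \<open>h > 0\<close>]
  have cot_angles: "cot (tri_angle d a b c) = (y^2+x^2-z^2)/sqrt h"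
    "cot (tri_angle d b a c) = (x^2+y^2-z^2)/sqrt h"
    "cot (tri_angle d a c b) = (z^2+x^2-y^2)/sqrt h"
    "cot (tri_angle d c a b) = (x^2+z^2-y^2)/sqrt h"
    "cot (tri_angle d b c a) = (z^2+y^2-x^2)/sqrt h"
    "cot (tri_angle d c b a) = (y^2+z^2-x^2)/sqrt h"
    by (rule cot; use len comm in \<open>simp add: h_def heron_def algebra_simps\<close>)+
  have "face_energy d d' {a,b,c} =
       cot (tri_angle d a b c) * (d' {a,b})^2 + cot (tri_angle d a c b) * (d' {a,c})^2
     + cot (tri_angle d b a c) * (d' {a,b})^2 + cot (tri_angle d b c a) * (d' {b,c})^2
     + cot (tri_angle d c a b) * (d' {a,c})^2 + cot (tri_angle d c b a) * (d' {b,c})^2"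
    unfolding face_energy_def using dist by (simp add: opp comm)
  also have "\<dots> = 2 * heron_polar (x^2) (y^2) (z^2) (d' {b,c}^2) (d' {a,c}^2) (d' {a,b}^2) / sqrt h"
  proof -
    define s where "s = sqrt h"
    have "s \<noteq> 0" using \<open>h > 0\<close> unfolding s_def by simp
    then show ?thesis unfolding cot_angles heron_polar_def s_def[symmetric] by (simp add: field_simps)
  qed
  finally show ?thesis unfolding h_def .
qed

lemma edge_of_face: "f \<in> F \<Longrightarrow> u \<in> f \<Longrightarrow> v \<in> f \<Longrightarrow> u \<noteq> v \<Longrightarrow> {u,v} \<in> edges F"
  unfolding edges_def by auto

lemma edge_length_pos: "euclidean_metric F d \<Longrightarrow> e \<in> edges F \<Longrightarrow> d e > 0"
  unfolding euclidean_metric_def by blast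

lemma edge_in_face: "{i,j} \<in> edges F \<Longrightarrow> i \<noteq> j \<and> (\<exists>f\<in>F. {i,j} \<subseteq> f)"
  unfolding edges_def by (auto simp: card_2_iff)

lemma face_lengths:
  assumes m: "euclidean_metric F d" and f: "{a,b,c} \<in> F" and dist: "a \<noteq> b" "b \<noteq> c" "a \<noteq> c"
  shows "d {b,c} > 0" "d {a,c} > 0" "d {a,b} > 0"
    and "heron ((d {b,c})^2) ((d {a,c})^2) ((d {a,b})^2) > 0"
proof -
  show pos: "d {b,c} > 0" "d {a,c} > 0" "d {a,b} > 0"
    using edge_length_pos[OF m] edge_of_face[OF f] dist by simp_all
  have comm: "{c,a} = {a,c}" "{c,b} = {b,c}" "{b,a} = {a,b}" by auto
  have tri: "\<forall>i\<in>{a,b,c}. \<forall>j\<in>{a,b,c}. \<forall>k\<in>{a,b,c}. i \<noteq> j \<and> j \<noteq> k \<and> i \<noteq> k \<longrightarrow>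
      d {i,j} < d {i,k} + d {k,j}"
    using m f unfolding euclidean_metric_def by (elim conjE) (rule bspec)
  have "d {b,c} < d {a,b} + d {a,c}" using tri[rule_format, of b c a] dist by (simp add: comm)
  moreover have "d {a,c} < d {a,b} + d {b,c}" using tri[rule_format, of a c b] dist by simp
  moreover have "d {a,b} < d {a,c} + d {b,c}" using tri[rule_format, of a b c] dist by (simp add: comm)
  ultimately show "heron ((d {b,c})^2) ((d {a,c})^2) ((d {a,b})^2) > 0"
    using pos by (intro heron_pos_of_triangle) auto
qed

definition scaled_on :: "'a set \<Rightarrow> ('a set \<Rightarrow> real) \<Rightarrow> ('a set \<Rightarrow> real) \<Rightarrow> real \<Rightarrow> bool" where
  "scaled_on f d1 d2 c \<longleftrightarrow> (\<forall>e. e \<subseteq> f \<and> card e = 2 \<longrightarrow> d2 e = c * d1 e)"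

lemma scaled_onD: "scaled_on f d1 d2 c \<Longrightarrow> e \<subseteq> f \<Longrightarrow> card e = 2 \<Longrightarrow> d2 e = c * d1 e"
  unfolding scaled_on_def by blast

text \<open>Local comparison: by Pedoe's inequality the face energy of (d1, d2) is at least
that of (d2, d2) (which is 8 times the d2-area), with equality only if the two triangles
are similar.\<close>

lemma face_energy_compare:
  assumes m1: "euclidean_metric F d1" and m2: "euclidean_metric F d2"
    and f: "f \<in> F" "card f = 3"
  shows "face_energy d2 d2 f \<le> face_energy d1 d2 f"
    and "face_energy d1 d2 f = face_energy d2 d2 f \<Longrightarrow> \<exists>c>0. scaled_on f d1 d2 c"
proof -
  obtain a b c where abc: "f = {a,b,c}" "a \<noteq> b" "b \<noteq> c" "a \<noteq> c"
    using f(2) card_3_iff by metis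
  note D1 = face_lengths[OF m1 f(1)[unfolded abc(1)] abc(2-4)]
  note D2 = face_lengths[OF m2 f(1)[unfolded abc(1)] abc(2-4)]
  define p1 p2 p3 where "p1 = (d1 {b,c})^2" and "p2 = (d1 {a,c})^2" and "p3 = (d1 {a,b})^2"
  define q1 q2 q3 where "q1 = (d2 {b,c})^2" and "q2 = (d2 {a,c})^2" and "q3 = (d2 {a,b})^2"
  have pos: "p1 > 0" "p2 > 0" "p3 > 0" "q1 > 0" "q2 > 0" "q3 > 0"
    and Hp: "heron p1 p2 p3 > 0" and Hq: "heron q1 q2 q3 > 0"
    using D1 D2 unfolding p1_def p2_def p3_def q1_def q2_def q3_def by simp_all
  have E12: "face_energy d1 d2 f = 2 * (heron_polar p1 p2 p3 q1 q2 q3 / sqrt (heron p1 p2 p3))"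
    unfolding abc(1) p1_def p2_def p3_def q1_def q2_def q3_def
    using face_energy_triangle[OF abc(2-4) refl refl refl D1] by simp
  have "face_energy d2 d2 f = 2 * (heron q1 q2 q3 / sqrt (heron q1 q2 q3))"
    unfolding abc(1) q1_def q2_def q3_def
    using face_energy_triangle[OF abc(2-4) refl refl refl D2] by (simp add: heron_polar_self)
  then have E22: "face_energy d2 d2 f = 2 * sqrt (heron q1 q2 q3)"
    by (simp add: real_div_sqrt Hq less_imp_le)
  have sp: "sqrt (heron p1 p2 p3) > 0" using Hp by simp
  show "face_energy d2 d2 f \<le> face_energy d1 d2 f"
    unfolding E12 E22 using pedoe_inequality(1)[OF pos Hp Hq] sp by (simp add: field_simps)
  assume "face_energy d1 d2 f = face_energy d2 d2 f"
  then have "heron_polar p1 p2 p3 q1 q2 q3 = sqrt (heron p1 p2 p3) * sqrt (heron q1 q2 q3)"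
    unfolding E12 E22 using sp by (simp add: field_simps)
  then obtain l where l: "l > 0" "q1 = l*p1" "q2 = l*p2" "q3 = l*p3"
    using pedoe_inequality(2)[OF pos Hp Hq] by blast
  have root: "d2 e = sqrt l * d1 e" if "(d2 e)^2 = l * (d1 e)^2" "d2 e > 0" "d1 e > 0" for e
  proof -
    have "d2 e = sqrt ((d2 e)^2)" using that(2) by simp
    also have "\<dots> = sqrt l * d1 e" using that(1,3) l(1) by (simp add: real_sqrt_mult)
    finally show ?thesis .
  qed
  have sides: "d2 {b,c} = sqrt l * d1 {b,c}" "d2 {a,c} = sqrt l * d1 {a,c}"
    "d2 {a,b} = sqrt l * d1 {a,b}"
    using root l D1 D2 unfolding p1_def p2_def p3_def q1_def q2_def q3_def by auto
  have "scaled_on f d1 d2 (sqrt l)"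
    unfolding scaled_on_def
  proof (intro allI impI)
    fix e assume e: "e \<subseteq> f \<and> card e = 2"
    then obtain u v where uv: "e = {u,v}" "u \<noteq> v" using card_2_iff by metis
    then have "e = {b,c} \<or> e = {a,c} \<or> e = {a,b}" using e abc(1) by auto
    then show "d2 e = sqrt l * d1 e" using sides by auto
  qed
  then show "\<exists>c>0. scaled_on f d1 d2 c" using l(1) by (intro exI[of _ "sqrt l"]) simp
qed

section \<open>The global energy as a sum of face energies\<close>

lemma surface_triangulation_basics:
  assumes "surface_triangulation V F"
  shows "finite V" "finite F" "\<And>f. f \<in> F \<Longrightarrow> card f = 3" "\<And>f. f \<in> F \<Longrightarrow> f \<subseteq> V"
proof -
  show "finite V" "\<And>f. f \<in> F \<Longrightarrow> card f = 3" "\<And>f. f \<in> F \<Longrightarrow> f \<subseteq> V"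
    using assms unfolding surface_triangulation_def by blast+
  then show "finite F" using finite_subset[of F "Pow V"] by blast
qed

text \<open>The energy of d' with respect to the cotangent weights of d.  It depends on d only
through the weights, i.e. through the Laplace matrix of d.\<close>

definition weighted_energy ::
  "'a set \<Rightarrow> 'a set set \<Rightarrow> ('a set \<Rightarrow> real) \<Rightarrow> ('a set \<Rightarrow> real) \<Rightarrow> real" where
  "weighted_energy V F d d' =
     (\<Sum>i\<in>V. \<Sum>j\<in>V. if i \<noteq> j then cot_weight F d i j * (d' {i,j})^2 else 0)"

text \<open>Double counting: each cotangent weight is half the sum of contributions of the
faces containing its edge, so the energy regroups into face energies.\<close>

lemma weighted_energy_faces:
  assumes st: "surface_triangulation V F"
  shows "weighted_energy V F d d' = (\<Sum>f\<in>F. face_energy d d' f) / 2"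
proof -
  note S = surface_triangulation_basics[OF st]
  define G where "G i j f = (if i \<noteq> j \<and> {i,j} \<subseteq> f
      then cot (tri_angle d i j (the_elem (f - {i,j}))) * (d' {i,j})^2 else 0)" for i j f
  have pair: "(if i \<noteq> j then cot_weight F d i j * (d' {i,j})^2 else 0) = (\<Sum>f\<in>F. G i j f) / 2"
    for i j
  proof (cases "i \<noteq> j \<and> {i,j} \<in> edges F")
    case True
    then show ?thesis unfolding cot_weight_def G_def using S(2)
      by (auto simp: sum_distrib_right sum.inter_filter intro!: sum.cong)
  next
    case False
    then have "G i j f = 0" if "f \<in> F" for f
      using edge_of_face[OF that] unfolding G_def by auto
    then show ?thesis using False by (auto simp: cot_weight_def)
  qed
  have face: "(\<Sum>i\<in>V. \<Sum>j\<in>V. G i j f) = face_energy d d' f" if f: "f \<in> F" for f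
    unfolding face_energy_def
  proof (rule sum.mono_neutral_cong_right[OF S(1) S(4)[OF f]])
    show "\<forall>i\<in>V - f. (\<Sum>j\<in>V. G i j f) = 0" by (auto simp: G_def)
    show "(\<Sum>j\<in>V. G i j f) = (\<Sum>j\<in>f. if i \<noteq> j
        then cot (tri_angle d i j (the_elem (f - {i,j}))) * (d' {i,j})^2 else 0)" if "i \<in> f" for i
      by (rule sum.mono_neutral_cong_right[OF S(1) S(4)[OF f]]) (auto simp: G_def that)
  qed
  have "weighted_energy V F d d' = (\<Sum>i\<in>V. \<Sum>j\<in>V. \<Sum>f\<in>F. G i j f) / 2"
    unfolding weighted_energy_def pair by (simp add: sum_divide_distrib)
  also have "(\<Sum>i\<in>V. \<Sum>j\<in>V. \<Sum>f\<in>F. G i j f) = (\<Sum>f\<in>F. \<Sum>i\<in>V. \<Sum>j\<in>V. G i j f)"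
    by (simp add: sum.swap[of _ V F])
  also have "\<dots> = (\<Sum>f\<in>F. face_energy d d' f)" using face by simp
  finally show ?thesis .
qed

text \<open>Equal cotangent weights force every face to be similar: the energies of (d1, d2)
and (d2, d2) coincide, while face by face the first dominates the second.\<close>

lemma equal_weights_faces_similar:
  assumes st: "surface_triangulation V F"
    and m1: "euclidean_metric F d1" and m2: "euclidean_metric F d2"
    and w: "\<forall>i\<in>V. \<forall>j\<in>V. i \<noteq> j \<longrightarrow> cot_weight F d1 i j = cot_weight F d2 i j"
    and f: "f \<in> F"
  shows "\<exists>c>0. scaled_on f d1 d2 c"
proof -
  note S = surface_triangulation_basics[OF st]
  have "weighted_energy V F d1 d2 = weighted_energy V F d2 d2"
    unfolding weighted_energy_def using w by (intro sum.cong refl) auto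
  then have "(\<Sum>g\<in>F. face_energy d1 d2 g - face_energy d2 d2 g) = 0"
    unfolding weighted_energy_faces[OF st] by (simp add: sum_subtractf)
  moreover have nonneg: "0 \<le> face_energy d1 d2 g - face_energy d2 d2 g" if "g \<in> F" for g
    using face_energy_compare(1)[OF m1 m2 that S(3)[OF that]] by simp
  ultimately have "\<forall>g\<in>F. face_energy d1 d2 g - face_energy d2 d2 g = 0"
    using sum_nonneg_eq_0_iff[OF S(2), of "\<lambda>g. face_energy d1 d2 g - face_energy d2 d2 g"] nonneg
    by blast
  then have "face_energy d1 d2 f - face_energy d2 d2 f = 0" using f by blast
  then show ?thesis using face_energy_compare(2)[OF m1 m2 f S(3)[OF f]] by simp
qed

section \<open>Gluing the similarity ratios of the faces\<close>

lemma link_connected: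
  assumes "surface_triangulation V F" "v \<in> V" "u \<in> link_vertices F v" "w \<in> link_vertices F v"
  shows "(u, w) \<in> {(x, y). {x, y} \<in> link_edges F v}\<^sup>*"
  using assms unfolding surface_triangulation_def by simp

lemma skeleton_connected:
  assumes "surface_triangulation V F" "u \<in> V" "w \<in> V"
  shows "(u, w) \<in> {(x, y). {x, y} \<in> edges F}\<^sup>*"
  using assms unfolding surface_triangulation_def by simp

lemma scaled_on_shared_edge:
  assumes "scaled_on f d1 d2 a" "scaled_on g d1 d2 b"
    and "u \<in> f" "v \<in> f" "u \<in> g" "v \<in> g" "u \<noteq> v" "d1 {u,v} > 0"
  shows "a = b"
proof -
  have sub: "{u,v} \<subseteq> f" "{u,v} \<subseteq> g" using assms(3-6) by simp_all
  have card: "card {u,v} = 2" using assms(7) by simp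
  have "a * d1 {u,v} = b * d1 {u,v}"
    using scaled_onD[OF assms(1) sub(1) card] scaled_onD[OF assms(2) sub(2) card] by (rule trans[OF sym])
  then show ?thesis using assms(8) by simp
qed

lemma triangle_other_vertex:
  assumes "card f = 3" shows "\<exists>u\<in>f. u \<noteq> v"
proof -
  have "\<not> f \<subseteq> {v}"
  proof
    assume "f \<subseteq> {v}"
    then have "card f \<le> card {v}" by (intro card_mono) simp_all
    then show False using assms by simp
  qed
  then show ?thesis by blast
qed

text \<open>Around a vertex v the faces form a connected chain (the link of v is connected),
and consecutive faces share an edge through v, so they all have the same ratio.\<close>

lemma scale_constant_around_vertex:
  assumes st: "surface_triangulation V F" and m1: "euclidean_metric F d1"
    and cf: "\<forall>h\<in>F. scaled_on h d1 d2 (cf h)"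
    and fg: "f \<in> F" "g \<in> F" "v \<in> f" "v \<in> g"
  shows "cf f = cf g"
proof -
  note S = surface_triangulation_basics[OF st]
  have share: "cf h = cf h'"
    if h: "h \<in> F" "h' \<in> F" "v \<in> h" "v \<in> h'" "y \<in> h" "y \<in> h'" "y \<noteq> v" for h h' y
  proof -
    have "d1 {v,y} > 0" using edge_length_pos[OF m1 edge_of_face[OF h(1,3,5)]] h(7) by simp
    then show ?thesis
      using scaled_on_shared_edge[OF cf[rule_format, OF h(1)] cf[rule_format, OF h(2)]
          h(3,5,4,6) h(7)[symmetric]] by simp
  qed
  have in_link: "y \<in> link_vertices F v" if "h \<in> F" "v \<in> h" "y \<in> h" "y \<noteq> v" for h y
    using that unfolding link_vertices_def link_edges_def by blast
  obtain u where u: "u \<in> f" "u \<noteq> v" using triangle_other_vertex[OF S(3)[OF fg(1)]] by blast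
  obtain w where w: "w \<in> g" "w \<noteq> v" using triangle_other_vertex[OF S(3)[OF fg(2)]] by blast
  have "v \<in> V" using S(4)[OF fg(1)] fg(3) by blast
  then have path: "(u, w) \<in> {(x, y). {x, y} \<in> link_edges F v}\<^sup>*"
    using link_connected[OF st _ in_link[OF fg(1,3) u] in_link[OF fg(2,4) w]] by simp
  have "y \<noteq> v \<and> (\<forall>h\<in>F. v \<in> h \<and> y \<in> h \<longrightarrow> cf h = cf f)"
    if "(u, y) \<in> {(x, y). {x, y} \<in> link_edges F v}\<^sup>*" for y
    using that
  proof (induction rule: rtrancl_induct)
    case base
    show ?case using share[OF _ fg(1) _ fg(3) _ u(1,2)] u(2) by blast
  next
    case (step x y)
    then obtain h0 where h0: "{x,y} = h0 - {v}" "h0 \<in> F" "v \<in> h0"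
      unfolding link_edges_def by blast
    then have "x \<in> h0" "y \<in> h0" "y \<noteq> v" by blast+
    then show ?case using step.IH share[OF _ h0(2) _ h0(3)] h0(2,3) by metis
  qed
  from this[OF path] have "cf g = cf f" using fg(2,4) w(1) by simp
  then show ?thesis by simp
qed

text \<open>Since the 1-skeleton is connected, moving from face to face through common
vertices reaches every face, so all faces have the same ratio.\<close>

lemma scale_constant:
  assumes st: "surface_triangulation V F" and m1: "euclidean_metric F d1"
    and cf: "\<forall>h\<in>F. scaled_on h d1 d2 (cf h)"
    and fg: "f \<in> F" "g \<in> F"
  shows "cf f = cf g"
proof -
  note S = surface_triangulation_basics[OF st]
  note around = scale_constant_around_vertex[OF st m1 cf]
  obtain u where u: "u \<in> f" using triangle_other_vertex[OF S(3)[OF fg(1)]] by blast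
  obtain w where w: "w \<in> g" using triangle_other_vertex[OF S(3)[OF fg(2)]] by blast
  have "u \<in> V" "w \<in> V" using S(4)[OF fg(1)] S(4)[OF fg(2)] u w by blast+
  then have path: "(u, w) \<in> {(x, y). {x, y} \<in> edges F}\<^sup>*" by (rule skeleton_connected[OF st])
  have "\<forall>h\<in>F. y \<in> h \<longrightarrow> cf h = cf f" if "(u, y) \<in> {(x, y). {x, y} \<in> edges F}\<^sup>*" for y
    using that
  proof (induction rule: rtrancl_induct)
    case base
    show ?case using around[OF _ fg(1) _ u] by simp
  next
    case (step x y)
    from step(2) have xy: "{x,y} \<in> edges F" by simp
    obtain h0 where h0: "h0 \<in> F" "x \<in> h0" "y \<in> h0" using edge_in_face[OF xy] by blast
    then have "cf h0 = cf f" using step.IH by simp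
    then show ?case using around[OF _ h0(1) _ h0(3)] by simp
  qed
  from this[OF path] have "cf g = cf f" using fg(2) w by simp
  then show ?thesis by simp
qed

section \<open>Scale invariance of the cotangent weights\<close>

lemma law_of_cosines_scale:
  assumes "(c::real) \<noteq> 0"
  shows "((c*x)^2 + (c*y)^2 - (c*z)^2) / (2*(c*x)*(c*y)) = (x^2+y^2-z^2) / (2*x*y)"
proof -
  have "((c*x)^2 + (c*y)^2 - (c*z)^2) / (2*(c*x)*(c*y)) = (c^2*(x^2+y^2-z^2)) / (c^2*(2*x*y))"
    by (simp add: power_mult_distrib algebra_simps power2_eq_square)
  also have "\<dots> = (x^2+y^2-z^2) / (2*x*y)" using assms by simp
  finally show ?thesis .
qed

lemma cot_weight_scale:
  assumes st: "surface_triangulation V F" and c: "c > 0"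
    and scaled: "\<forall>e\<in>edges F. d2 e = c * d1 e"
  shows "cot_weight F d1 i j = cot_weight F d2 i j"
proof (cases "{i,j} \<in> edges F")
  case True
  have ij: "i \<noteq> j" using edge_in_face[OF True] by simp
  have angle: "tri_angle d1 i j (the_elem (f - {i,j})) = tri_angle d2 i j (the_elem (f - {i,j}))"
    if "f \<in> {f\<in>F. {i,j} \<subseteq> f}" for f
  proof -
    have f: "f \<in> F" "{i,j} \<subseteq> f" using that by simp_all
    have "card (f - {i,j}) = 1"
      using surface_triangulation_basics(3)[OF st f(1)] f(2) ij by (simp add: card_Diff_subset)
    then obtain k where k: "f - {i,j} = {k}" using card_1_singletonE by blast
    then have "k \<in> f" "k \<noteq> i" "k \<noteq> j" by auto
    then have "{k,i} \<in> edges F" "{k,j} \<in> edges F" "{i,j} \<in> edges F"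
      using edge_of_face[OF f(1)] f(2) ij True by auto
    then have "d2 {k,i} = c * d1 {k,i}" "d2 {k,j} = c * d1 {k,j}" "d2 {i,j} = c * d1 {i,j}"
      using scaled by simp_all
    then show ?thesis
      unfolding k the_elem_eq tri_angle_def using law_of_cosines_scale c by simp
  qed
  have "(\<Sum>f\<in>{f\<in>F. {i,j} \<subseteq> f}. cot (tri_angle d1 i j (the_elem (f - {i,j}))))
      = (\<Sum>f\<in>{f\<in>F. {i,j} \<subseteq> f}. cot (tri_angle d2 i j (the_elem (f - {i,j}))))"
    by (rule sum.cong[OF refl]) (simp only: angle)
  then show ?thesis unfolding cot_weight_def using True by simp
next
  case False
  then show ?thesis unfolding cot_weight_def by simp
qed

theorem mainTheorem1:
  fixes V :: "'a set" and F :: "'a set set" and d1 d2 :: "'a set \<Rightarrow> real"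
  assumes "surface_triangulation V F"
    and "euclidean_metric F d1" and "euclidean_metric F d2"
  shows "(\<forall>i\<in>V. \<forall>j\<in>V. laplace V F d1 i j = laplace V F d2 i j) \<longleftrightarrow>
         (\<exists>c>0. \<forall>e\<in>edges F. d2 e = c * d1 e)"
proof
  note st = assms(1) and m1 = assms(2) and m2 = assms(3)
  assume "\<forall>i\<in>V. \<forall>j\<in>V. laplace V F d1 i j = laplace V F d2 i j"
  then have "\<forall>i\<in>V. \<forall>j\<in>V. i \<noteq> j \<longrightarrow> cot_weight F d1 i j = cot_weight F d2 i j"
    unfolding laplace_def by (metis neg_equal_iff_equal)
  then have "\<forall>f\<in>F. \<exists>c>0. scaled_on f d1 d2 c"
    using equal_weights_faces_similar[OF st m1 m2] by blast
  then obtain cf where cf: "\<forall>f\<in>F. cf f > 0 \<and> scaled_on f d1 d2 (cf f)" by metis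
  obtain f0 where f0: "f0 \<in> F" using st unfolding surface_triangulation_def by blast
  have "d2 e = cf f0 * d1 e" if e: "e \<in> edges F" for e
  proof -
    obtain g where g: "g \<in> F" "e \<subseteq> g" "card e = 2" using e unfolding edges_def by blast
    have "cf g = cf f0" using scale_constant[OF st m1 _ g(1) f0] cf by blast
    then show ?thesis using scaled_onD[OF _ g(2,3)] cf g(1) by metis
  qed
  then show "\<exists>c>0. \<forall>e\<in>edges F. d2 e = c * d1 e" using cf f0 by blast
next
  assume "\<exists>c>0. \<forall>e\<in>edges F. d2 e = c * d1 e"
  then obtain c where "c > 0" "\<forall>e\<in>edges F. d2 e = c * d1 e" by blast
  then have "cot_weight F d1 i j = cot_weight F d2 i j" for i j
    using cot_weight_scale[OF assms(1)] by blast
  then show "\<forall>i\<in>V. \<forall>j\<in>V. laplace V F d1 i j = laplace V F d2 i j"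
    unfolding laplace_def by simp
qed

end
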